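(* Let $n\geq 4$ and let $Q$ be a regular $n$-gon. Then there exists a (symmetric) bilinear form $B$ on $X_Q^*$ such that $B([\psi_d],[\psi_{d'}])>0$ for all $d,d'\in\mathrm{Diag}_n$ that do not cross (including $d=d'$); i.e. $\Sigma_Q$ satisfies: $B(f_1^\perp,f_2^\perp)>0$ whenever facets $f_1,f_2$ of $\Sigma_Q$ share a vertex.
   Context: Let $Q$ be a convex $n$-gon in $\mathbb{R}^2$ with vertices $p_1,\dots,p_n$ in cyclic order; identify $p_i$ with label $i$, so triangulations of $Q$ (using only vertices of $Q$) are identified with elements of $\mathcal{T}_n$ (each triangulation identified with its set of diagonals) and diagonals with elements of $\mathrm{Diag}_n=\{\{i,j\}\subseteq[n]: i-j\not\equiv\pm1 \pmod n\}$. Two diagonals cross if they meet in the interior of $Q$. Let $X_Q$ be the space of formal combinations $\sum_{p\in V(Q)} c_p\cdot p$ with $\sum_p c_p=0$ and $\sum_p c_p p=0$ in $\mathbb{R}^2$; let $X_Q^*$ be the space of functions $V(Q)\to\mathbb{R}$ modulo restrictions of affine functions $\mathbb{R}^2\to\mathbb{R}$, with pairing $\langle[\psi],\sum_p c_p\cdot p\rangle=\sum_p c_p\psi(p)$. For a triangulation $T$ let $v_T=(\operatorname{area}(Q_{T,p}))_{p\in V(Q)}$ where $Q_{T,p}$ is the union of the triangles of $T$ having $p$ as a vertex. The secondary polytope $\Sigma_Q$ is the convex hull of the $v_T$, translated to lie in $X_Q$. It is known (Gelfand–Kapranov–Zelevinsky) that $\Sigma_Q$ is a full-dimensional polytope in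 the $(n-3)$-dimensional space $X_Q$ realizing the associahedron: its vertices are exactly the points $v_T$, $T\in\mathcal{T}_n$; its facets are $f_d$, $d\in\mathrm{Diag}_n$, where $f_d$ contains $v_T$ iff $d\in T$; and an outward normal of $f_d$ is $f_d^\perp=[\psi_d]$, where $\psi_d=\min(\ell_d,0)$ restricted to $V(Q)$ and $\ell_d$ is any nonzero affine function vanishing at both endpoints of $d$. Two facets $f_d,f_{d'}$ share a vertex iff $d,d'$ do not cross. *)

theory Defs
  imports "HOL-Analysis.Analysis"
begin

text \<open>Vertices are labelled 1..n, p i is the vertex with label i.
 p is a regular n-gon with vertices in cyclic order (either orientation).\<close>
definition regular_ngon :: "nat \<Rightarrow> (nat \<Rightarrow> real \<times> real) \<Rightarrow> bool" where
  "regular_ngon n p \<longleftrightarrow> (\<exists>c r \<theta> (\<epsilon>::real). r > 0 \<and> (\<epsilon> = 1 \<or> \<epsilon> = -1) \<and>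
     (\<forall>i\<in>{1..n}. p i = (fst c + r * cos (\<theta> + \<epsilon> * 2 * pi * real i / real n),
                         snd c + r * sin (\<theta> + \<epsilon> * 2 * pi * real i / real n))))"

definition Diag :: "nat \<Rightarrow> nat set set" where
  "Diag n = {{i, j} | i j. i \<in> {1..n} \<and> j \<in> {1..n} \<and> i \<noteq> j \<and>
                 i mod n \<noteq> (j + 1) mod n \<and> j mod n \<noteq> (i + 1) mod n}"

definition affine_fun :: "(real \<times> real \<Rightarrow> real) \<Rightarrow> bool" where
  "affine_fun l \<longleftrightarrow> (\<exists>a b c. \<forall>x. l x = a * fst x + b * snd x + c)"

definition diag_seg :: "(nat \<Rightarrow> real \<times> real) \<Rightarrow> nat set \<Rightarrow> (real \<times> real) set" where
  "diag_seg p d = \<Union>{closed_segment (p a) (p b) | a b. d = {a, b}}"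

definition crosses :: "nat \<Rightarrow> (nat \<Rightarrow> real \<times> real) \<Rightarrow> nat set \<Rightarrow> nat set \<Rightarrow> bool" where
  "crosses n p d d' \<longleftrightarrow> d \<noteq> d' \<and>
     (diag_seg p d \<inter> diag_seg p d' \<inter> interior (convex hull (p ` {1..n}))) \<noteq> {}"

definition psi :: "(nat \<Rightarrow> real \<times> real) \<Rightarrow> (real \<times> real \<Rightarrow> real) \<Rightarrow> nat \<Rightarrow> real" where
  "psi p l = (\<lambda>i. min (l (p i)) 0)"

definition bform :: "nat \<Rightarrow> (nat \<Rightarrow> nat \<Rightarrow> real) \<Rightarrow> (nat \<Rightarrow> real) \<Rightarrow> (nat \<Rightarrow> real) \<Rightarrow> real" where
  "bform n M f g = (\<Sum>i\<in>{1..n}. \<Sum>j\<in>{1..n}. M i j * f i * g j)"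

text \<open>The form descends to X_Q^* = functions modulo restrictions of affine functions.\<close>
definition descends :: "nat \<Rightarrow> (nat \<Rightarrow> real \<times> real) \<Rightarrow> (nat \<Rightarrow> nat \<Rightarrow> real) \<Rightarrow> bool" where
  "descends n p M \<longleftrightarrow> (\<forall>l g. affine_fun l \<longrightarrow>
      bform n M (\<lambda>i. l (p i)) g = 0 \<and> bform n M g (\<lambda>i. l (p i)) = 0)"

end

theory Submission
  imports Defs
begin

text \<open>
  Take B(u, v) = \<Sum>i j. M i j * u i * v j with M = 2 cos(2\<pi>/n) I - A - ((2 cos(2\<pi>/n) - 2)/n) J,
  where A is the adjacency matrix of the n-cycle and J the all-ones matrix. The vertex values of an
  affine function satisfy u(j-1) + u(j+1) = 2 cos(2\<pi>/n) u(j) + const, so M maps them to a constant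
  column, which vanishes because the rows of M sum to zero; hence B descends to X_Q^*.

  If l vanishes on the diagonal {a, b}, then l(p t) is a nonzero multiple of
  sin(\<pi>(t - a)/n) sin(\<pi>(t - b)/n), so up to a positive factor and an affine function, psi_d is
  the negative part of this sine product, supported on the vertices strictly inside the arc from a
  to b. For non-crossing diagonals the two arcs can be taken disjoint or nested, so that one support
  avoids the other and its neighbours. Then only the rank-one part of M contributes, giving
  (2 - 2 cos(2\<pi>/n))/n times the product of the two (negative) sums.
\<close>

section \<open>The cycle form\<close>

lemma bform_sym: "(\<And>i j. M i j = M j i) \<Longrightarrow> bform n M u v = bform n M v u"
  unfolding bform_def by (subst sum.swap) (simp add: algebra_simps)

lemma bform_cong:
  "(\<And>i. i \<in> {1..n} \<Longrightarrow> u i = u' i) \<Longrightarrow> (\<And>i. i \<in> {1..n} \<Longrightarrow> v i = v' i) \<Longrightarrow>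
   bform n M u v = bform n M u' v'"
  unfolding bform_def by (intro sum.cong refl) auto

lemma bform_scale_left: "bform n M (\<lambda>i. k * u i) v = k * bform n M u v"
  unfolding bform_def by (simp add: sum_distrib_left algebra_simps)

lemma bform_diff_left: "bform n M (\<lambda>i. u i - w i) v = bform n M u v - bform n M w v"
  unfolding bform_def by (simp add: sum_subtractf[symmetric] algebra_simps)

lemma bform_eq_sum_columns: "bform n M u v = (\<Sum>j\<in>{1..n}. v j * (\<Sum>i\<in>{1..n}. M i j * u i))"
  unfolding bform_def by (subst sum.swap) (simp add: sum_distrib_left algebra_simps)

lemma bform_left_zero_if_image_constant:
  assumes "n > 0"
    and rows: "\<And>i. i \<in> {1..n} \<Longrightarrow> (\<Sum>j\<in>{1..n}. M i j) = 0"
    and image: "\<And>j. j \<in> {1..n} \<Longrightarrow> (\<Sum>i\<in>{1..n}. M i j * u i) = K"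
  shows "bform n M u v = 0"
proof -
  have "real n * K = (\<Sum>j\<in>{1..n}. \<Sum>i\<in>{1..n}. M i j * u i)"
    using image by simp
  also have "\<dots> = (\<Sum>i\<in>{1..n}. u i * (\<Sum>j\<in>{1..n}. M i j))"
    by (subst sum.swap) (simp add: sum_distrib_left algebra_simps)
  also have "\<dots> = 0"
    using rows by simp
  finally have "K = 0"
    using \<open>n > 0\<close> by simp
  then show ?thesis
    unfolding bform_eq_sum_columns using image by simp
qed

definition cyc_pred :: "nat \<Rightarrow> nat \<Rightarrow> nat" where
  "cyc_pred n j = (if j = 1 then n else j - 1)"

definition cyc_succ :: "nat \<Rightarrow> nat \<Rightarrow> nat" where
  "cyc_succ n j = (if j = n then 1 else Suc j)"

definition cycle_adj :: "nat \<Rightarrow> nat \<Rightarrow> nat \<Rightarrow> bool" where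
  "cycle_adj n i j \<longleftrightarrow> i = Suc j \<or> j = Suc i \<or> (i = 1 \<and> j = n) \<or> (i = n \<and> j = 1)"

definition cycle_form :: "nat \<Rightarrow> nat \<Rightarrow> nat \<Rightarrow> real" where
  "cycle_form n i j = (if i = j then 2 * cos (2 * pi / n) else 0) - (if cycle_adj n i j then 1 else 0)
     - (2 * cos (2 * pi / n) - 2) / n"

lemma cycle_form_sym: "cycle_form n i j = cycle_form n j i"
  unfolding cycle_form_def cycle_adj_def by auto

lemma cycle_adj_iff:
  assumes "n \<ge> 3" "j \<in> {1..n}"
  shows "{i\<in>{1..n}. cycle_adj n i j} = {cyc_pred n j, cyc_succ n j}" "cyc_pred n j \<noteq> cyc_succ n j"
  using assms unfolding cycle_adj_def cyc_pred_def cyc_succ_def by auto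

lemma sum_cycle_adj:
  assumes "n \<ge> 3" "j \<in> {1..n}"
  shows "(\<Sum>i\<in>{1..n}. (if cycle_adj n i j then 1 else 0) * u i) = u (cyc_pred n j) + (u (cyc_succ n j) :: real)"
proof -
  have "(\<Sum>i\<in>{1..n}. (if cycle_adj n i j then 1 else 0) * u i) = (\<Sum>i\<in>{1..n}. if cycle_adj n i j then u i else 0)"
    by (intro sum.cong) auto
  also have "\<dots> = (\<Sum>i\<in>{i\<in>{1..n}. cycle_adj n i j}. u i)"
    by (rule sum.inter_filter[symmetric]) simp
  also have "\<dots> = u (cyc_pred n j) + u (cyc_succ n j)"
    using cycle_adj_iff[OF assms] by simp
  finally show ?thesis .
qed

lemma cycle_form_column:
  assumes "n \<ge> 3" "j \<in> {1..n}"
  shows "(\<Sum>i\<in>{1..n}. cycle_form n i j * u i) =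
     2 * cos (2 * pi / n) * u j - u (cyc_pred n j) - u (cyc_succ n j) - (2 * cos (2 * pi / n) - 2) / n * sum u {1..n}"
proof -
  have "(\<Sum>i\<in>{1..n}. cycle_form n i j * u i) =
      (\<Sum>i\<in>{1..n}. if i = j then 2 * cos (2 * pi / n) * u i else 0)
      - (\<Sum>i\<in>{1..n}. (if cycle_adj n i j then 1 else 0) * u i)
      - (\<Sum>i\<in>{1..n}. (2 * cos (2 * pi / n) - 2) / n * u i)"
    unfolding sum_subtractf[symmetric] by (intro sum.cong) (auto simp: cycle_form_def algebra_simps)
  then show ?thesis
    using sum_cycle_adj[OF assms, of u] assms by (simp add: sum_distrib_left)
qed

lemma cycle_form_row_sum:
  assumes "n \<ge> 3" "i \<in> {1..n}"
  shows "(\<Sum>j\<in>{1..n}. cycle_form n i j) = 0"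
  using cycle_form_column[OF assms, of "\<lambda>_. 1"] assms by (simp add: cycle_form_sym)

lemma cos_2pi_div_lt_1: "n \<ge> 2 \<Longrightarrow> cos (2 * pi / n) < 1"
  using cos_monotone_0_pi[of 0 "2 * pi / n"] by (simp add: field_simps)

lemma cycle_form_pos_if_separated:
  assumes "n \<ge> 3" "sum u {1..n} < 0" "sum v {1..n} < 0"
    and separated: "\<And>j. j \<in> {1..n} \<Longrightarrow> v j \<noteq> 0 \<Longrightarrow> u j = 0 \<and> u (cyc_pred n j) = 0 \<and> u (cyc_succ n j) = 0"
  shows "bform n (cycle_form n) u v > 0"
proof -
  define k where "k = (2 - 2 * cos (2 * pi / n)) / n"
  have "bform n (cycle_form n) u v = (\<Sum>j\<in>{1..n}. v j * (k * sum u {1..n}))"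
    unfolding bform_eq_sum_columns
  proof (intro sum.cong refl)
    fix j assume j: "j \<in> {1..n}"
    have "v j \<noteq> 0 \<Longrightarrow> (\<Sum>i\<in>{1..n}. cycle_form n i j * u i) = k * sum u {1..n}"
      using separated[OF j] cycle_form_column[OF assms(1) j, of u] unfolding k_def
      by (simp add: minus_divide_left algebra_simps)
    then show "v j * (\<Sum>i\<in>{1..n}. cycle_form n i j * u i) = v j * (k * sum u {1..n})"
      by (cases "v j = 0") auto
  qed
  also have "\<dots> = k * (sum u {1..n} * sum v {1..n})"
    by (simp add: sum_distrib_left sum_distrib_right algebra_simps)
  finally have "bform n (cycle_form n) u v = k * (sum u {1..n} * sum v {1..n})" .
  moreover have "k > 0"
    using cos_2pi_div_lt_1[of n] assms(1) unfolding k_def by (simp add: divide_pos_pos)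
  ultimately show ?thesis
    using assms(2,3) by (simp add: mult_neg_neg)
qed

section \<open>Sine products on the vertex labels\<close>

definition sine_product :: "nat \<Rightarrow> real \<Rightarrow> real \<Rightarrow> real \<Rightarrow> real" where
  "sine_product n a b t = sin (pi * (t - a) / n) * sin (pi * (t - b) / n)"

lemma sin_pi_div_pos: "0 < x \<Longrightarrow> x < real n \<Longrightarrow> sin (pi * x / n) > 0"
  by (intro sin_gt_zero) (simp_all add: divide_less_eq)

lemma sin_pi_div_neg: "x < 0 \<Longrightarrow> - real n < x \<Longrightarrow> sin (pi * x / n) < 0"
  using sin_pi_div_pos[of "- x" n] by simp

lemma sine_product_neg: "a < t \<Longrightarrow> t < b \<Longrightarrow> b < a + n \<Longrightarrow> sine_product n a b t < 0"
  unfolding sine_product_def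
  by (intro mult_pos_neg sin_pi_div_pos sin_pi_div_neg) simp_all

lemma sine_product_pos:
  assumes "t < a \<and> t < b \<and> a < t + n \<and> b < t + n \<or> a < t \<and> b < t \<and> t < a + n \<and> t < b + n"
  shows "sine_product n a b t > 0"
  using assms unfolding sine_product_def
  by (elim disjE conjE)
    (simp_all add: mult_neg_neg sin_pi_div_neg mult_pos_pos sin_pi_div_pos)

definition inner_arc :: "nat \<Rightarrow> nat \<Rightarrow> nat \<Rightarrow> nat \<Rightarrow> real" where
  "inner_arc n a b i = min (sine_product n a b i) 0"

definition outer_arc :: "nat \<Rightarrow> nat \<Rightarrow> nat \<Rightarrow> nat \<Rightarrow> real" where
  "outer_arc n a b i = min (- sine_product n a b i) 0"

lemma outer_arc_eq: "outer_arc n a b i = inner_arc n a b i - sine_product n a b i"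
  unfolding outer_arc_def inner_arc_def by (simp add: min_def)

lemma inner_arc_eq_0:
  assumes "i \<le> a \<or> b \<le> i" "a < b" "i \<in> {1..n}" "a \<in> {1..n}" "b \<in> {1..n}"
  shows "inner_arc n a b i = 0"
proof (cases "i = a \<or> i = b")
  case True
  then show ?thesis
    unfolding inner_arc_def sine_product_def by auto
next
  case False
  then show ?thesis
    using assms sine_product_pos[of i a b n] unfolding inner_arc_def by auto
qed

lemma outer_arc_eq_0:
  assumes "a \<le> i" "i \<le> b" "b \<le> n" "1 \<le> a"
  shows "outer_arc n a b i = 0"
proof (cases "i = a \<or> i = b")
  case True
  then show ?thesis
    unfolding outer_arc_def sine_product_def by auto
next
  case False
  then show ?thesis
    using assms sine_product_neg[of a i b n] unfolding outer_arc_def by auto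
qed

lemma sum_neg_if_witness:
  assumes "finite A" "k \<in> A" "f k < 0" "\<And>i. i \<in> A \<Longrightarrow> f i \<le> (0::real)"
  shows "sum f A < 0"
  using sum_strict_mono_ex1[of A f "\<lambda>_. 0"] assms by auto

lemma sum_inner_arc_neg:
  assumes "1 \<le> a" "a + 1 < b" "b \<le> n"
  shows "sum (inner_arc n a b) {1..n} < 0"
proof (rule sum_neg_if_witness)
  show "a + 1 \<in> {1..n}" using assms by auto
  show "inner_arc n a b (a + 1) < 0"
    using sine_product_neg[of a "a + 1" b n] assms unfolding inner_arc_def by auto
qed (simp_all add: inner_arc_def)

lemma sum_outer_arc_neg:
  assumes "1 \<le> a" "a < b" "b \<le> n" "\<not> (a = 1 \<and> b = n)"
  shows "sum (outer_arc n a b) {1..n} < 0"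
proof -
  obtain k where k: "k \<in> {1..n}" "k < a \<or> b < k"
    using assms by (cases "a = 1") (auto intro: that[of n] that[of 1])
  show ?thesis
  proof (rule sum_neg_if_witness)
    show "outer_arc n a b k < 0"
      using sine_product_pos[of k a b n] assms k unfolding outer_arc_def by auto
  qed (use k in \<open>simp_all add: outer_arc_def\<close>)
qed

lemma cycle_form_pos_inner_arc:
  assumes "n \<ge> 3" "1 \<le> a" "a + 1 < b" "b \<le> n" "sum u {1..n} < 0"
    and vanish: "\<And>k. a \<le> k \<Longrightarrow> k \<le> b \<Longrightarrow> u k = 0"
  shows "bform n (cycle_form n) u (inner_arc n a b) > 0"
proof (rule cycle_form_pos_if_separated)
  show "sum (inner_arc n a b) {1..n} < 0"
    using assms by (intro sum_inner_arc_neg) auto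
  fix j assume j: "j \<in> {1..n}" "inner_arc n a b j \<noteq> 0"
  then have "a < j" "j < b"
    using inner_arc_eq_0[of j a b n] assms by force+
  then have "cyc_pred n j = j - 1" "cyc_succ n j = j + 1"
    using assms unfolding cyc_pred_def cyc_succ_def by auto
  then show "u j = 0 \<and> u (cyc_pred n j) = 0 \<and> u (cyc_succ n j) = 0"
    using vanish \<open>a < j\<close> \<open>j < b\<close> by simp
qed (use assms in auto)

section \<open>Affine functions and crossing segments in the plane\<close>

definition det2 :: "real \<times> real \<Rightarrow> real \<times> real \<Rightarrow> real" where
  "det2 u v = fst u * snd v - snd u * fst v"

lemma affine_fun_vanishing_at_two_points:
  assumes "affine_fun l" "l P = 0" "l Q = 0" "P \<noteq> Q"
  shows "\<exists>\<kappa>. \<forall>x. l x = \<kappa> * det2 (Q - P) (x - P)"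
proof -
  obtain A B C where l: "\<And>x. l x = A * fst x + B * snd x + C"
    using assms(1) unfolding affine_fun_def by blast
  define d1 d2 where "d1 = fst Q - fst P" and "d2 = snd Q - snd P"
  have "d1 \<noteq> 0 \<or> d2 \<noteq> 0"
    using assms(4) by (auto simp: d1_def d2_def prod_eq_iff)
  then have d: "d1\<^sup>2 + d2\<^sup>2 \<noteq> 0"
    by (simp add: sum_power2_eq_zero_iff)
  have ortho: "A * d1 + B * d2 = 0"
    using assms(2,3) unfolding l d1_def d2_def by (simp add: algebra_simps)
  have "l x = (B * d1 - A * d2) / (d1\<^sup>2 + d2\<^sup>2) * det2 (Q - P) (x - P)" for x
  proof -
    define y1 y2 where "y1 = fst x - fst P" and "y2 = snd x - snd P"
    have det: "det2 (Q - P) (x - P) = d1 * y2 - d2 * y1"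
      by (simp add: det2_def d1_def d2_def y1_def y2_def)
    have expand: "(B * d1 - A * d2) * (d1 * y2 - d2 * y1) =
        (A * y1 + B * y2) * (d1\<^sup>2 + d2\<^sup>2) - (y1 * d1 + y2 * d2) * (A * d1 + B * d2)"
      by (simp add: algebra_simps power2_eq_square)
    have "l x = A * y1 + B * y2"
      using assms(2) unfolding l y1_def y2_def by (simp add: algebra_simps)
    also have "\<dots> = (B * d1 - A * d2) * (d1 * y2 - d2 * y1) / (d1\<^sup>2 + d2\<^sup>2)"
      using expand d ortho by (simp add: eq_divide_eq)
    finally show ?thesis
      unfolding det by simp
  qed
  then show ?thesis by blast
qed

lemma affine_fun_proportional:
  assumes "affine_fun l" "affine_fun g" "P \<noteq> Q"
    and "l P = 0" "l Q = 0" "g P = 0" "g Q = 0" "g R \<noteq> 0"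
  shows "l x = l R / g R * g x"
proof -
  obtain \<kappa> \<mu> where "\<And>x. l x = \<kappa> * det2 (Q - P) (x - P)" "\<And>x. g x = \<mu> * det2 (Q - P) (x - P)"
    using affine_fun_vanishing_at_two_points assms by metis
  then show ?thesis
    using assms(8) by simp
qed

lemma affine_fun_convex_comb:
  assumes "affine_fun g"
  shows "g ((1 - u) *\<^sub>R x + u *\<^sub>R y) = (1 - u) * g x + u * g y"
proof -
  obtain A B C where "\<And>z. g z = A * fst z + B * snd z + C"
    using assms unfolding affine_fun_def by blast
  then show ?thesis
    by (simp add: algebra_simps)
qed

lemma affine_fun_zero_on_open_segment:
  assumes "affine_fun g" "g x * g y < 0"
  obtains z where "z \<in> open_segment x y" "g z = 0"
proof -
  define u where "u = g x / (g x - g y)"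
  have "g x - g y \<noteq> 0" "0 < u" "u < 1"
    using assms(2) unfolding u_def by (auto simp: mult_less_0_iff divide_simps)
  moreover have "x \<noteq> y"
    using assms(2) by auto
  moreover have "g ((1 - u) *\<^sub>R x + u *\<^sub>R y) = 0"
    unfolding affine_fun_convex_comb[OF assms(1)] u_def using \<open>g x - g y \<noteq> 0\<close>
    by (simp add: field_simps)
  ultimately show ?thesis
    using that[of "(1 - u) *\<^sub>R x + u *\<^sub>R y"] by (auto simp: in_segment)
qed

text \<open>Both lines are zero sets of affine functions; if they met in two points the functions
  would be proportional, contradicting the sign change of g.\<close>
lemma open_segments_meet:
  assumes g: "affine_fun g" "g P1 = 0" "g P2 = 0" "g Q1 * g Q2 < 0"
    and h: "affine_fun h" "h Q1 = 0" "h Q2 = 0" "h P1 * h P2 < 0"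
  shows "\<exists>x. x \<in> open_segment P1 P2 \<and> x \<in> open_segment Q1 Q2"
proof -
  obtain y where y: "y \<in> open_segment P1 P2" "h y = 0"
    using affine_fun_zero_on_open_segment[OF h(1,4)] .
  obtain x where x: "x \<in> open_segment Q1 Q2" "g x = 0"
    using affine_fun_zero_on_open_segment[OF g(1,4)] .
  have "g y = 0" "h x = 0"
    using y(1) x(1) g(2,3) h(2,3)
    by (auto simp: in_segment affine_fun_convex_comb[OF g(1)] affine_fun_convex_comb[OF h(1)])
  have "x = y"
  proof (rule ccontr)
    assume "x \<noteq> y"
    have "h P1 \<noteq> 0"
      using h(4) by auto
    then have "g Q1 = g P1 / h P1 * h Q1"
      using affine_fun_proportional[OF g(1) h(1) \<open>x \<noteq> y\<close>] x(2) \<open>g y = 0\<close> \<open>h x = 0\<close> y(2) by blast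
    then show False
      using g(4) h(2) by simp
  qed
  then show ?thesis
    using x(1) y(1) by blast
qed

lemma open_segments_meet_in_interior:
  fixes P1 P2 Q1 Q2 :: "real \<times> real"
  assumes "x \<in> open_segment P1 P2" "x \<in> open_segment Q1 Q2" "\<not> collinear {P1, Q1, P2}"
  shows "x \<in> interior (convex hull {P1, P2, Q1, Q2})"
proof -
  define S where "S b = (if b then closed_segment P1 P2 else closed_segment Q1 Q2)" for b
  have ri: "x \<in> rel_interior (S b)" for b
    using assms(1,2) unfolding S_def by (auto simp: rel_interior_closed_segment)
  have "x \<in> rel_interior (convex hull (\<Union>(S ` UNIV)))"
  proof (subst rel_interior_convex_hull_union)
    show "\<forall>b\<in>UNIV. convex (S b) \<and> S b \<noteq> {}"
      by (simp add: S_def)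
    have "x = (\<Sum>b\<in>(UNIV :: bool set). (1/2) *\<^sub>R x)"
      by (simp add: sum_constant_scaleR)
    then show "x \<in> {\<Sum>b\<in>UNIV. c b *\<^sub>R s b |c s. (\<forall>b\<in>UNIV. 0 < c b) \<and> sum c UNIV = 1 \<and>
        (\<forall>b\<in>UNIV. s b \<in> rel_interior (S b))}"
      using ri by (intro CollectI exI[of _ "\<lambda>_. 1/2"] exI[of _ "\<lambda>_. x"]) simp
  qed simp
  moreover have "convex hull (\<Union>(S ` UNIV)) = convex hull {P1, P2, Q1, Q2}"
  proof -
    have "\<Union>(S ` UNIV) = convex hull {P1, P2} \<union> convex hull {Q1, Q2}"
      by (auto simp: S_def UNIV_bool segment_convex_hull)
    then show ?thesis
      by (simp only: hull_Un_left[symmetric] hull_Un_right[symmetric]) (simp add: insert_commute)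
  qed
  moreover have "affine hull {P1, P2, Q1, Q2} = UNIV"
  proof -
    have "\<not> collinear {P1, P2, Q1, Q2}"
      using assms(3) collinear_subset[of "{P1, P2, Q1, Q2}" "{P1, Q1, P2}"] by blast
    then have "aff_dim {P1, P2, Q1, Q2} = int DIM(real \<times> real)"
      using aff_dim_le_DIM[of "{P1, P2, Q1, Q2}"] by (simp add: collinear_aff_dim)
    then show ?thesis
      using aff_dim_eq_full by blast
  qed
  ultimately show ?thesis
    by (simp add: rel_interior_interior)
qed

section \<open>Regular polygons\<close>

lemma Diag_normal_form:
  assumes "d \<in> Diag n" "n \<ge> 2"
  obtains a b where "d = {a, b}" "1 \<le> a" "a + 1 < b" "b \<le> n" "\<not> (a = 1 \<and> b = n)"
proof -
  obtain i j where ij: "d = {i, j}" "i \<in> {1..n}" "j \<in> {1..n}" "i \<noteq> j"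
    "i mod n \<noteq> (j + 1) mod n" "j mod n \<noteq> (i + 1) mod n"
    using assms(1) unfolding Diag_def by blast
  define a b where "a = min i j" and "b = max i j"
  have ab: "d = {a, b}" "1 \<le> a" "a < b" "b \<le> n"
    "a mod n \<noteq> (b + 1) mod n" "b mod n \<noteq> (a + 1) mod n"
    using ij unfolding a_def b_def by (auto simp: min_def max_def)
  show ?thesis
  proof (rule that)
    show "a + 1 < b"
      using ab(3,6) by (cases "b = a + 1") auto
    have "(n + 1) mod n = 1 mod n"
      using assms(2) by (simp add: mod_Suc)
    then show "\<not> (a = 1 \<and> b = n)"
      using ab(5) by auto
  qed (use ab in auto)
qed

locale regular_polygon =
  fixes n :: nat and p :: "nat \<Rightarrow> real \<times> real" and c :: "real \<times> real" and r \<theta> \<epsilon> :: real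
  assumes n_ge_3: "n \<ge> 3" and r_pos: "r > 0" and orientation: "\<epsilon> = 1 \<or> \<epsilon> = -1"
    and vertices: "\<forall>i\<in>{1..n}. p i = (fst c + r * cos (\<theta> + \<epsilon> * 2 * pi * real i / real n),
                                     snd c + r * sin (\<theta> + \<epsilon> * 2 * pi * real i / real n))"
begin

definition angle :: "real \<Rightarrow> real" where
  "angle t = \<theta> + \<epsilon> * 2 * pi * t / n"

definition vertex :: "real \<Rightarrow> real \<times> real" where
  "vertex t = (fst c + r * cos (angle t), snd c + r * sin (angle t))"

lemma p_eq_vertex: "i \<in> {1..n} \<Longrightarrow> p i = vertex (real i)"
  using vertices unfolding vertex_def angle_def by simp

lemma angle_shift: "angle (t + (k :: real)) = angle t + k * (\<epsilon> * 2 * pi / n)"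
  using n_ge_3 unfolding angle_def by (simp add: field_simps)

lemma vertex_shift_n: "vertex (t + real n) = vertex t"
proof -
  have "angle (t + real n) = angle t + \<epsilon> * (2 * pi)"
    using n_ge_3 by (simp add: angle_shift)
  then show ?thesis
    using orientation unfolding vertex_def by (auto simp: cos_add sin_add)
qed

lemma p_cyc_pred:
  assumes "j \<in> {1..n}"
  shows "p (cyc_pred n j) = vertex (real j - 1)"
proof (cases "j = 1")
  case True
  then show ?thesis
    using vertex_shift_n[of 0] n_ge_3 by (simp add: cyc_pred_def p_eq_vertex)
next
  case False
  moreover have "j - 1 \<in> {1..n}" "real (j - 1) = real j - 1"
    using False assms by auto
  ultimately show ?thesis
    using p_eq_vertex[of "j - 1"] by (simp add: cyc_pred_def)
qed

lemma p_cyc_succ: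
  assumes "j \<in> {1..n}"
  shows "p (cyc_succ n j) = vertex (real j + 1)"
proof (cases "j = n")
  case True
  then show ?thesis
    using vertex_shift_n[of 1] n_ge_3 by (simp add: cyc_succ_def p_eq_vertex add.commute)
next
  case False
  then show ?thesis
    using assms p_eq_vertex[of "j + 1"] by (simp add: cyc_succ_def add.commute)
qed

lemma affine_fun_vertex:
  assumes "affine_fun l"
  obtains X Y where "\<And>t. l (vertex t) = l c + X * cos (angle t) + Y * sin (angle t)"
proof -
  obtain A B C where "\<And>z. l z = A * fst z + B * snd z + C"
    using assms unfolding affine_fun_def by blast
  then show ?thesis
    by (intro that[of "r * A" "r * B"]) (simp add: vertex_def algebra_simps)
qed

lemma affine_fun_vertex_neighbours:
  assumes "affine_fun l"
  shows "l (vertex (t - 1)) + l (vertex (t + 1)) =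
    2 * cos (2 * pi / n) * l (vertex t) + (2 - 2 * cos (2 * pi / n)) * l c"
proof -
  obtain X Y where l: "\<And>t. l (vertex t) = l c + X * cos (angle t) + Y * sin (angle t)"
    using affine_fun_vertex[OF assms] by blast
  define \<delta> where "\<delta> = \<epsilon> * 2 * pi / n"
  have shift: "angle (t - 1) = angle t - \<delta>" "angle (t + 1) = angle t + \<delta>"
    using angle_shift[of t "-1"] angle_shift[of t 1] unfolding \<delta>_def by simp_all
  have "cos \<delta> = cos (2 * pi / n)"
    using orientation unfolding \<delta>_def by auto
  then show ?thesis
    unfolding l shift cos_add cos_diff sin_add sin_diff by (simp add: algebra_simps)
qed

lemma descends_cycle_form: "descends n p (cycle_form n)"
  unfolding descends_def
proof (intro allI impI conjI)
  fix l :: "real \<times> real \<Rightarrow> real" and g :: "nat \<Rightarrow> real"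
  assume l: "affine_fun l"
  define u where "u i = l (p i)" for i
  have column: "(\<Sum>i\<in>{1..n}. cycle_form n i j * u i) =
      - (2 - 2 * cos (2 * pi / n)) * l c - (2 * cos (2 * pi / n) - 2) / n * sum u {1..n}"
    if "j \<in> {1..n}" for j
    using cycle_form_column[OF n_ge_3 that, of u] affine_fun_vertex_neighbours[OF l, of "real j"]
      p_eq_vertex[OF that] p_cyc_pred[OF that] p_cyc_succ[OF that]
    unfolding u_def by (simp add: algebra_simps)
  have "bform n (cycle_form n) u g = 0"
    using n_ge_3 cycle_form_row_sum[OF n_ge_3] column
    by (intro bform_left_zero_if_image_constant) auto
  moreover have "bform n (cycle_form n) g u = bform n (cycle_form n) u g"
    by (simp add: bform_sym cycle_form_sym)
  ultimately show "bform n (cycle_form n) (\<lambda>i. l (p i)) g = 0" "bform n (cycle_form n) g (\<lambda>i. l (p i)) = 0"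
    unfolding u_def by simp_all
qed

text \<open>By the product-to-sum formula the sine product is (cos(\<pi>(b-a)/n) - cos(\<pi>(2t-a-b)/n))/2,
  and the second cosine is a coordinate of vertex t in a rotated frame.\<close>
definition sine_line :: "real \<Rightarrow> real \<Rightarrow> real \<times> real \<Rightarrow> real" where
  "sine_line a b z = (cos (pi * (b - a) / n) - ((fst z - fst c) * cos (\<theta> + \<epsilon> * pi * (a + b) / n)
     + (snd z - snd c) * sin (\<theta> + \<epsilon> * pi * (a + b) / n)) / r) / 2"

lemma affine_sine_line: "affine_fun (sine_line a b)"
proof -
  define \<phi> where "\<phi> = \<theta> + \<epsilon> * pi * (a + b) / n"
  show ?thesis
    unfolding affine_fun_def sine_line_def \<phi>_def[symmetric] using r_pos
    by (intro exI[of _ "- cos \<phi> / (2 * r)"] exI[of _ "- sin \<phi> / (2 * r)"]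
        exI[of _ "cos (pi * (b - a) / n) / 2 + (fst c * cos \<phi> + snd c * sin \<phi>) / (2 * r)"])
      (simp add: field_simps)
qed

lemma sine_line_vertex: "sine_line a b (vertex t) = sine_product n a b t"
proof -
  define \<phi> where "\<phi> = \<theta> + \<epsilon> * pi * (a + b) / n"
  define S where "S = pi * (t - a) / n + pi * (t - b) / n"
  have "angle t - \<phi> = \<epsilon> * S"
    using n_ge_3 unfolding angle_def \<phi>_def S_def by (simp add: field_simps)
  moreover have "cos (\<epsilon> * S) = cos S"
    using orientation by auto
  ultimately have rotated: "cos (angle t) * cos \<phi> + sin (angle t) * sin \<phi> = cos S"
    by (simp add: cos_diff[symmetric])
  have "pi * (t - a) / n - pi * (t - b) / n = pi * (b - a) / n"
    using n_ge_3 by (simp add: field_simps)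
  then have "sine_product n a b t = (cos (pi * (b - a) / n) - cos S) / 2"
    unfolding sine_product_def sin_times_sin S_def by simp
  moreover have "((fst (vertex t) - fst c) * cos \<phi> + (snd (vertex t) - snd c) * sin \<phi>) / r = cos S"
    using r_pos by (simp add: vertex_def field_simps flip: rotated)
  ultimately show ?thesis
    unfolding sine_line_def \<phi>_def by simp
qed

lemma sine_line_p: "i \<in> {1..n} \<Longrightarrow> sine_line a b (p i) = sine_product n a b i"
  by (simp add: p_eq_vertex sine_line_vertex)

lemma p_distinct:
  assumes "i \<in> {1..n}" "j \<in> {1..n}" "i \<noteq> j"
  shows "p i \<noteq> p j"
proof
  assume "p i = p j"
  then have "sine_product n i i j = sine_product n i i i"
    using assms sine_line_p[of j i i] sine_line_p[of i i i] by simp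
  moreover have "sine_product n i i j > 0"
    using assms by (intro sine_product_pos) (cases "j < i"; auto)
  ultimately show False
    by (simp add: sine_product_def)
qed

lemma sine_product_kernel:
  "bform n (cycle_form n) (\<lambda>i. sine_product n a b i) v = 0"
  "bform n (cycle_form n) v (\<lambda>i. sine_product n a b i) = 0"
proof -
  have "bform n (cycle_form n) (\<lambda>i. sine_line a b (p i)) v = 0"
    "bform n (cycle_form n) v (\<lambda>i. sine_line a b (p i)) = 0"
    using descends_cycle_form affine_sine_line unfolding descends_def by blast+
  moreover have "bform n (cycle_form n) (\<lambda>i. sine_line a b (p i)) v = bform n (cycle_form n) (\<lambda>i. sine_product n a b i) v"
    "bform n (cycle_form n) v (\<lambda>i. sine_line a b (p i)) = bform n (cycle_form n) v (\<lambda>i. sine_product n a b i)"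
    by (intro bform_cong; simp add: sine_line_p)+
  ultimately show "bform n (cycle_form n) (\<lambda>i. sine_product n a b i) v = 0"
    "bform n (cycle_form n) v (\<lambda>i. sine_product n a b i) = 0"
    by simp_all
qed

lemma bform_outer_arc:
  "bform n (cycle_form n) (outer_arc n a b) v = bform n (cycle_form n) (inner_arc n a b) v"
proof -
  have "outer_arc n a b = (\<lambda>i. inner_arc n a b i - sine_product n a b i)"
    by (simp add: outer_arc_eq fun_eq_iff)
  then show ?thesis
    by (simp add: bform_diff_left sine_product_kernel)
qed

lemma affine_fun_vanishing_on_diagonal:
  assumes l: "affine_fun l" "\<exists>x. l x \<noteq> 0" "l (p a) = 0" "l (p b) = 0"
    and ab: "1 \<le> a" "a + 1 < b" "b \<le> n"
  obtains \<kappa> where "\<kappa> \<noteq> 0" "\<And>i. i \<in> {1..n} \<Longrightarrow> l (p i) = \<kappa> * sine_product n a b i"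
proof -
  have in_range: "a \<in> {1..n}" "b \<in> {1..n}" "a + 1 \<in> {1..n}"
    using ab by auto
  have "p a \<noteq> p b"
    using p_distinct in_range ab by simp
  moreover have "sine_line a b (p a) = 0" "sine_line a b (p b) = 0"
    using in_range by (simp_all add: sine_line_p sine_product_def)
  moreover have "sine_line a b (p (a + 1)) \<noteq> 0"
    using in_range sine_product_neg[of a "a + 1" b n] ab by (simp add: sine_line_p)
  ultimately have proportional: "l x = l (p (a + 1)) / sine_line a b (p (a + 1)) * sine_line a b x" for x
    using affine_fun_proportional[OF l(1) affine_sine_line] l(3,4) by blast
  show ?thesis
  proof (rule that)
    show "l (p (a + 1)) / sine_line a b (p (a + 1)) \<noteq> 0"
      using proportional l(2) by force
    show "l (p i) = l (p (a + 1)) / sine_line a b (p (a + 1)) * sine_product n a b i" if "i \<in> {1..n}" for i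
      using proportional[of "p i"] that by (simp add: sine_line_p)
  qed
qed

text \<open>Up to the factor |\<kappa>|, psi p l is inner_arc when \<kappa> > 0 and outer_arc when \<kappa> < 0;
  the two differ by the sine product, which lies in the kernel of the form.\<close>
lemma bform_psi_left:
  assumes "\<kappa> \<noteq> 0" and l: "\<And>i. i \<in> {1..n} \<Longrightarrow> l (p i) = \<kappa> * sine_product n a b i"
  shows "bform n (cycle_form n) (psi p l) v = \<bar>\<kappa>\<bar> * bform n (cycle_form n) (inner_arc n a b) v"
proof (cases "\<kappa> > 0")
  case True
  then have "bform n (cycle_form n) (psi p l) v = bform n (cycle_form n) (\<lambda>i. \<kappa> * inner_arc n a b i) v"
    by (intro bform_cong) (auto simp: psi_def l inner_arc_def min_def mult_le_0_iff)
  then show ?thesis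
    using True by (simp add: bform_scale_left)
next
  case False
  then have neg: "\<kappa> < 0"
    using assms(1) by simp
  then have "bform n (cycle_form n) (psi p l) v = bform n (cycle_form n) (\<lambda>i. - \<kappa> * outer_arc n a b i) v"
    by (intro bform_cong) (auto simp: psi_def l outer_arc_def min_def mult_le_0_iff)
  also have "\<dots> = - \<kappa> * bform n (cycle_form n) (outer_arc n a b) v"
    by (rule bform_scale_left)
  also have "\<dots> = - \<kappa> * bform n (cycle_form n) (inner_arc n a b) v"
    by (simp add: bform_outer_arc)
  finally show ?thesis
    using neg by simp
qed

lemma bform_psi_right:
  assumes "\<kappa> \<noteq> 0" and "\<And>i. i \<in> {1..n} \<Longrightarrow> l (p i) = \<kappa> * sine_product n a b i"
  shows "bform n (cycle_form n) v (psi p l) = \<bar>\<kappa>\<bar> * bform n (cycle_form n) v (inner_arc n a b)"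
  using bform_psi_left[OF assms] by (simp add: bform_sym[of "cycle_form n"] cycle_form_sym)

lemma interleaved_diagonals_cross:
  assumes "1 \<le> a" "a < a'" "a' < b" "b < b'" "b' \<le> n"
  shows "crosses n p {a, b} {a', b'}"
proof -
  have range: "a \<in> {1..n}" "b \<in> {1..n}" "a' \<in> {1..n}" "b' \<in> {1..n}"
    using assms by auto
  let ?g = "sine_line (real a) (real b)" and ?h = "sine_line (real a') (real b')"
  have g: "?g (p a) = 0" "?g (p b) = 0" "?g (p a') * ?g (p b') < 0"
    using range sine_product_neg[of a a' b n] sine_product_pos[of b' a b n] assms
    by (simp_all add: sine_line_p sine_product_def mult_neg_pos)
  have h: "?h (p a') = 0" "?h (p b') = 0" "?h (p a) * ?h (p b) < 0"
    using range sine_product_pos[of a a' b' n] sine_product_neg[of a' b b' n] assms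
    by (simp_all add: sine_line_p sine_product_def mult_pos_neg)
  obtain x where x: "x \<in> open_segment (p a) (p b)" "x \<in> open_segment (p a') (p b')"
    using open_segments_meet[OF affine_sine_line g affine_sine_line h] by blast
  have "\<not> collinear {p a, p a', p b}"
  proof
    assume "collinear {p a, p a', p b}"
    moreover have "p a \<noteq> p b"
      using p_distinct range assms by simp
    ultimately obtain u where "p a' = u *\<^sub>R p a + (1 - u) *\<^sub>R p b"
      using collinear_3_expand[of "p a" "p a'" "p b"] by blast
    then have "?g (p a') = 0"
      using affine_fun_convex_comb[OF affine_sine_line, where u = "1 - u" and x = "p a" and y = "p b"] g(1,2)
      by simp
    then show False
      using g(3) by simp
  qed
  then have "x \<in> interior (convex hull {p a, p b, p a', p b'})"
    using open_segments_meet_in_interior[OF x] by blast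
  moreover have "convex hull {p a, p b, p a', p b'} \<subseteq> convex hull (p ` {1..n})"
    using range by (intro hull_mono) auto
  ultimately have "x \<in> interior (convex hull (p ` {1..n}))"
    using interior_mono by blast
  moreover have "x \<in> diag_seg p {a, b}" "x \<in> diag_seg p {a', b'}"
    using x unfolding diag_seg_def by (blast intro: open_closed_segment)+
  moreover have "{a, b} \<noteq> {a', b'}"
    using assms by auto
  ultimately show ?thesis
    unfolding crosses_def by blast
qed

text \<open>In the nested case inner_arc a b is replaced by outer_arc a b, which vanishes on the
  whole arc from a to b and pairs in the same way.\<close>
lemma inner_arcs_pos_ordered:
  assumes ab: "1 \<le> a" "a + 1 < b" "b \<le> n" "\<not> (a = 1 \<and> b = n)"
    and ab': "1 \<le> a'" "a' + 1 < b'" "b' \<le> n"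
    and order: "a < a' \<or> a = a' \<and> b' \<le> b"
    and not_interleaved: "\<not> (a < a' \<and> a' < b \<and> b < b')"
  shows "bform n (cycle_form n) (inner_arc n a b) (inner_arc n a' b') > 0"
proof (cases "b \<le> a'")
  case True
  show ?thesis
  proof (rule cycle_form_pos_inner_arc[OF n_ge_3 ab'])
    show "sum (inner_arc n a b) {1..n} < 0"
      using ab by (intro sum_inner_arc_neg)
    show "inner_arc n a b k = 0" if "a' \<le> k" "k \<le> b'" for k
      using that True ab ab' by (intro inner_arc_eq_0) auto
  qed
next
  case False
  then have nested: "a \<le> a'" "b' \<le> b"
    using order not_interleaved by auto
  have "bform n (cycle_form n) (outer_arc n a b) (inner_arc n a' b') > 0"
  proof (rule cycle_form_pos_inner_arc[OF n_ge_3 ab'])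
    show "sum (outer_arc n a b) {1..n} < 0"
      using ab by (intro sum_outer_arc_neg) auto
    show "outer_arc n a b k = 0" if "a' \<le> k" "k \<le> b'" for k
      using that nested ab by (intro outer_arc_eq_0) auto
  qed
  then show ?thesis
    by (simp add: bform_outer_arc)
qed

lemma inner_arcs_pos:
  assumes ab: "1 \<le> a" "a + 1 < b" "b \<le> n" "\<not> (a = 1 \<and> b = n)"
    and ab': "1 \<le> a'" "a' + 1 < b'" "b' \<le> n" "\<not> (a' = 1 \<and> b' = n)"
    and not_interleaved: "\<not> (a < a' \<and> a' < b \<and> b < b')" "\<not> (a' < a \<and> a < b' \<and> b' < b)"
  shows "bform n (cycle_form n) (inner_arc n a b) (inner_arc n a' b') > 0"
proof (cases "a < a' \<or> a = a' \<and> b' \<le> b")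
  case True
  then show ?thesis
    using inner_arcs_pos_ordered[OF ab ab'(1-3)] not_interleaved(1) by blast
next
  case False
  then have "a' < a \<or> a' = a \<and> b \<le> b'"
    by auto
  then have "bform n (cycle_form n) (inner_arc n a' b') (inner_arc n a b) > 0"
    using inner_arcs_pos_ordered[OF ab' ab(1-3)] not_interleaved(2) by blast
  then show ?thesis
    by (simp add: bform_sym[of "cycle_form n"] cycle_form_sym)
qed

lemma bform_psi_pos_if_not_crossing:
  assumes d: "d \<in> Diag n" "d' \<in> Diag n" "\<not> crosses n p d d'"
    and l: "affine_fun l" "\<exists>x. l x \<noteq> 0" "\<forall>i\<in>d. l (p i) = 0"
    and l': "affine_fun l'" "\<exists>x. l' x \<noteq> 0" "\<forall>i\<in>d'. l' (p i) = 0"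
  shows "bform n (cycle_form n) (psi p l) (psi p l') > 0"
proof -
  have "n \<ge> 2"
    using n_ge_3 by simp
  obtain a b where ab: "d = {a, b}" "1 \<le> a" "a + 1 < b" "b \<le> n" "\<not> (a = 1 \<and> b = n)"
    by (rule Diag_normal_form[OF d(1) \<open>n \<ge> 2\<close>])
  obtain a' b' where ab': "d' = {a', b'}" "1 \<le> a'" "a' + 1 < b'" "b' \<le> n" "\<not> (a' = 1 \<and> b' = n)"
    by (rule Diag_normal_form[OF d(2) \<open>n \<ge> 2\<close>])
  have "l (p a) = 0" "l (p b) = 0"
    using l(3) ab(1) by simp_all
  then obtain \<kappa> where \<kappa>: "\<kappa> \<noteq> 0" "\<And>i. i \<in> {1..n} \<Longrightarrow> l (p i) = \<kappa> * sine_product n a b i"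
    using affine_fun_vanishing_on_diagonal[OF l(1,2) _ _ ab(2-4)] by blast
  have "l' (p a') = 0" "l' (p b') = 0"
    using l'(3) ab'(1) by simp_all
  then obtain \<kappa>' where \<kappa>': "\<kappa>' \<noteq> 0" "\<And>i. i \<in> {1..n} \<Longrightarrow> l' (p i) = \<kappa>' * sine_product n a' b' i"
    using affine_fun_vanishing_on_diagonal[OF l'(1,2) _ _ ab'(2-4)] by blast
  have "crosses n p d' d \<longleftrightarrow> crosses n p d d'"
    unfolding crosses_def by (metis Int_commute)
  then have not_interleaved: "\<not> (a < a' \<and> a' < b \<and> b < b')" "\<not> (a' < a \<and> a < b' \<and> b' < b)"
    using interleaved_diagonals_cross[of a a' b b'] interleaved_diagonals_cross[of a' a b' b] d(3) ab ab'
    by auto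
  then have "bform n (cycle_form n) (inner_arc n a b) (inner_arc n a' b') > 0"
    using inner_arcs_pos[OF ab(2-5) ab'(2-5)] by blast
  moreover have "bform n (cycle_form n) (psi p l) (psi p l') =
      \<bar>\<kappa>\<bar> * (\<bar>\<kappa>'\<bar> * bform n (cycle_form n) (inner_arc n a b) (inner_arc n a' b'))"
    using bform_psi_left[OF \<kappa>, of "psi p l'"] bform_psi_right[OF \<kappa>', of "inner_arc n a b"] by simp
  ultimately show ?thesis
    using \<kappa>(1) \<kappa>'(1) by simp
qed

end

theorem lemma2p7:
  fixes n :: nat and p :: "nat \<Rightarrow> real \<times> real"
  assumes "n \<ge> 4" and "regular_ngon n p"
  shows "\<exists>M. (\<forall>i j. M i j = M j i) \<and> descends n p M \<and>
    (\<forall>d\<in>Diag n. \<forall>d'\<in>Diag n. \<not> crosses n p d d' \<longrightarrow>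
      (\<forall>l l'. affine_fun l \<and> (\<exists>x. l x \<noteq> 0) \<and> (\<forall>i\<in>d. l (p i) = 0) \<and>
              affine_fun l' \<and> (\<exists>x. l' x \<noteq> 0) \<and> (\<forall>i\<in>d'. l' (p i) = 0) \<longrightarrow>
              bform n M (psi p l) (psi p l') > 0))"
proof -
  have "n \<ge> 3"
    using assms(1) by simp
  then obtain c r \<theta> \<epsilon> where "regular_polygon n p c r \<theta> \<epsilon>"
    using assms(2) unfolding regular_ngon_def regular_polygon_def by blast
  then interpret regular_polygon n p c r \<theta> \<epsilon> .
  show ?thesis
    using cycle_form_sym descends_cycle_form bform_psi_pos_if_not_crossing by blast
qed

end
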